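(* Let $(X,\gamma)$ and $(Y,\nu)$ be probability spaces. Let $(E_i)_{i\ge1}$ be pairwise independent measurable subsets of $X$ and $(F_i)_{i\ge1}$ pairwise independent measurable subsets of $Y$ such that $\gamma(E_i)=\nu(F_i)$ for all $i$ and $\sum_{i=1}^\infty\gamma(E_i)=\infty$. Then for all measurable $E\subseteq X$, $F\subseteq Y$ and every $\varepsilon>0$ there exists a positive integer $i$ such that both $\gamma(E\cap E_i)>(\gamma(E)-\varepsilon)\gamma(E_i)$ and $\nu(F\cap F_i)>(\nu(F)-\varepsilon)\nu(F_i)$. *)

theory Defs
  imports "HOL-Probability.Probability"
begin

end

theory Submission
  imports Defs
begin

(* Proof idea (a second-moment argument).
   Call an index i "bad" for an event E if prob (E \<inter> E_i) \<le> (prob E - \<epsilon>) * prob E_i.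
   For pairwise independent events E_i the centred indicators f_i = 1_{E_i} - prob E_i are
   orthogonal in L^2 with squared norm at most prob E_i.  Expanding
     0 \<le> \<integral> (1_E + \<epsilon> * \<Sum>_{i\<in>T} f_i)^2
   for a finite set T of bad indices yields \<epsilon>^2 * \<Sum>_{i\<in>T} prob E_i \<le> 1.
   Hence bad indices carry a total mass of at most 1/\<epsilon>^2.
   For the theorem, suppose no index is good for both spaces.  Then every index is bad
   either for (E, E_i) in M or for (F, F_i) in N; as prob E_i = prob F_i, each finite
   sum of the prob E_i is at most 2/\<epsilon>^2, so the series would converge. *)

lemma (in prob_space) indep_event_prob:
  assumes "indep_event A B"
  shows "prob (A \<inter> B) = prob A * prob B"
proof -
  have "prob (\<Inter>i\<in>UNIV. case_bool A B i) = (\<Prod>i\<in>UNIV. prob (case_bool A B i))"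
    using assms unfolding indep_event_def indep_events_def by auto
  moreover have "(\<Inter>i\<in>UNIV. case_bool A B i) = A \<inter> B"
    by (auto split: bool.splits)
  ultimately show ?thesis
    by (simp add: UNIV_bool)
qed

lemma (in prob_space) integral_indicator_centered:
  assumes A: "A \<in> events" and B: "B \<in> events"
  shows "(\<integral>x. (indicator A x - c) * (indicator B x - prob B) \<partial>M) = prob (A \<inter> B) - prob A * prob B"
proof -
  have "(\<lambda>x. (indicator A x - c) * (indicator B x - prob B)) =
        (\<lambda>x. indicator (A \<inter> B) x - prob B * indicator A x - c * indicator B x + c * prob B)"
    by (auto simp: indicator_def fun_eq_iff algebra_simps)
  moreover have "(\<integral>x. indicator (A \<inter> B) x - prob B * indicator A x - c * indicator B x + c * prob B \<partial>M)
      = prob (A \<inter> B) - prob B * prob A - c * prob B + c * prob B"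
    using A B by (simp add: emeasure_eq_measure prob_space)
  ultimately show ?thesis
    by simp
qed

lemma (in prob_space) integrable_bounded:
  fixes f :: "'a \<Rightarrow> real"
  assumes "f \<in> borel_measurable M" and "\<And>x. \<bar>f x\<bar> \<le> B"
  shows "integrable M f"
  using assms by (intro integrable_const_bound[where B = B]) auto

definition (in prob_space) centered_sum :: "('i \<Rightarrow> 'a set) \<Rightarrow> 'i set \<Rightarrow> 'a \<Rightarrow> real" where
  "centered_sum A T x = (\<Sum>i\<in>T. indicator (A i) x - prob (A i))"

lemma (in prob_space) centered_indicator_bound: "\<bar>indicator A x - prob A\<bar> \<le> (1::real)"
  using prob_le_1[of A] by (auto simp: indicator_def)

lemma (in prob_space) centered_sum_measurable:
  assumes "\<And>i. i \<in> T \<Longrightarrow> A i \<in> events"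
  shows "centered_sum A T \<in> borel_measurable M"
  unfolding centered_sum_def[abs_def] using assms by measurable

lemma (in prob_space) centered_sum_bound: "\<bar>centered_sum A T x\<bar> \<le> card T"
proof -
  have "\<bar>centered_sum A T x\<bar> \<le> (\<Sum>i\<in>T. \<bar>indicator (A i) x - prob (A i)\<bar>)"
    unfolding centered_sum_def by (rule sum_abs)
  also have "\<dots> \<le> card T"
    using sum_bounded_above[of T "\<lambda>i. \<bar>indicator (A i) x - prob (A i)\<bar>" 1]
      centered_indicator_bound by simp
  finally show ?thesis .
qed

lemma (in prob_space) integral_indicator_centered_sum:
  assumes E: "E \<in> events" and A: "\<And>i. i \<in> T \<Longrightarrow> A i \<in> events"
  shows "(\<integral>x. indicator E x * centered_sum A T x \<partial>M) = (\<Sum>i\<in>T. prob (E \<inter> A i) - prob E * prob (A i))"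
proof -
  have "(\<integral>x. indicator E x * centered_sum A T x \<partial>M)
      = (\<Sum>i\<in>T. \<integral>x. indicator E x * (indicator (A i) x - prob (A i)) \<partial>M)"
    unfolding centered_sum_def sum_distrib_left using A E centered_indicator_bound
    by (intro Bochner_Integration.integral_sum integrable_bounded[where B = 1])
       (auto simp: indicator_def)
  then show ?thesis
    using A E integral_indicator_centered[of E _ 0] by simp
qed

text \<open>Pairwise independence makes the centred indicators orthogonal, so the second moment
  of the centred sum is the sum of the variances prob (A i) - prob (A i)^2.\<close>

lemma (in prob_space) integral_centered_sum_sq_le:
  assumes T: "finite T" and A: "\<And>i. i \<in> T \<Longrightarrow> A i \<in> events"
    and indep: "\<And>i j. i \<in> T \<Longrightarrow> j \<in> T \<Longrightarrow> i \<noteq> j \<Longrightarrow> indep_event (A i) (A j)"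
  shows "(\<integral>x. (centered_sum A T x)^2 \<partial>M) \<le> (\<Sum>i\<in>T. prob (A i))"
proof -
  define f where "f i x = indicator (A i) x - prob (A i)" for i x
  have cov: "(\<integral>x. f i x * f j x \<partial>M) = (if i = j then prob (A i) - (prob (A i))^2 else 0)"
    if "i \<in> T" "j \<in> T" for i j
    using that A indep indep_event_prob
    unfolding f_def by (simp add: integral_indicator_centered power2_eq_square)
  have int_ff: "integrable M (\<lambda>x. f i x * f j x)" if "i \<in> T" "j \<in> T" for i j
    using that A centered_indicator_bound unfolding f_def
    by (intro integrable_bounded[where B = 1]) (auto simp: abs_mult intro: mult_le_one)
  have "(\<integral>x. (centered_sum A T x)^2 \<partial>M) = (\<Sum>i\<in>T. \<Sum>j\<in>T. \<integral>x. f i x * f j x \<partial>M)"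
    unfolding centered_sum_def f_def[symmetric] power2_eq_square sum_product using int_ff
    by (simp add: Bochner_Integration.integral_sum integrable_sum)
  also have "\<dots> = (\<Sum>i\<in>T. prob (A i) - (prob (A i))^2)"
    using T by (simp add: cov cong: sum.cong)
  also have "\<dots> \<le> (\<Sum>i\<in>T. prob (A i))"
    by (intro sum_mono) simp
  finally show ?thesis .
qed

text \<open>It follows from 0 \<le> \<integral> (1_E + \<epsilon> * S)^2 with S the
  centred sum.\<close>

lemma (in prob_space) bad_events_sum_bound:
  fixes A :: "'i \<Rightarrow> 'a set"
  assumes E: "E \<in> events" and T: "finite T"
    and A: "\<And>i. i \<in> T \<Longrightarrow> A i \<in> events"
    and indep: "\<And>i j. i \<in> T \<Longrightarrow> j \<in> T \<Longrightarrow> i \<noteq> j \<Longrightarrow> indep_event (A i) (A j)"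
    and eps: "\<epsilon> > 0"
    and bad: "\<And>i. i \<in> T \<Longrightarrow> prob (E \<inter> A i) \<le> (prob E - \<epsilon>) * prob (A i)"
  shows "(\<Sum>i\<in>T. prob (A i)) \<le> 1 / \<epsilon>^2"
proof -
  define S where "S = centered_sum A T"
  define P where "P = (\<Sum>i\<in>T. prob (A i))"
  have S_meas: "S \<in> borel_measurable M"
    unfolding S_def using A by (rule centered_sum_measurable)
  have int_ES: "integrable M (\<lambda>x. indicator E x * S x)"
    using S_meas centered_sum_bound E unfolding S_def
    by (intro integrable_bounded[where B = "card T"]) (auto simp: indicator_def)
  have int_S2: "integrable M (\<lambda>x. (S x)^2)"
    using S_meas power_mono[OF centered_sum_bound abs_ge_zero, of A T _ 2] unfolding S_def
    by (intro integrable_bounded[where B = "(card T)^2"]) (auto simp: power_abs)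
  have correlation: "(\<integral>x. indicator E x * S x \<partial>M) \<le> - \<epsilon> * P"
  proof -
    have "(\<integral>x. indicator E x * S x \<partial>M) = (\<Sum>i\<in>T. prob (E \<inter> A i) - prob E * prob (A i))"
      unfolding S_def by (rule integral_indicator_centered_sum[OF E A])
    also have "\<dots> \<le> (\<Sum>i\<in>T. - \<epsilon> * prob (A i))"
      using bad by (intro sum_mono) (simp add: algebra_simps)
    finally show ?thesis
      by (simp add: P_def sum_distrib_left)
  qed
  have "0 \<le> (\<integral>x. (indicator E x + \<epsilon> * S x)^2 \<partial>M)"
    by simp
  also have "\<dots> = prob E + 2 * \<epsilon> * (\<integral>x. indicator E x * S x \<partial>M) + \<epsilon>^2 * (\<integral>x. (S x)^2 \<partial>M)"
  proof -
    have "(\<lambda>x. (indicator E x + \<epsilon> * S x)^2) =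
          (\<lambda>x. indicator E x + 2 * \<epsilon> * (indicator E x * S x) + \<epsilon>^2 * (S x)^2)"
      by (auto simp: fun_eq_iff indicator_def power2_eq_square algebra_simps)
    then show ?thesis
      using int_ES int_S2 E by (simp add: emeasure_eq_measure)
  qed
  also have "\<dots> \<le> 1 + 2 * \<epsilon> * (- \<epsilon> * P) + \<epsilon>^2 * P"
    using eps correlation integral_centered_sum_sq_le[OF T A indep] prob_le_1[of E]
    unfolding S_def P_def by (intro add_mono mult_left_mono) auto
  also have "\<dots> = 1 - \<epsilon>^2 * P"
    by (simp add: power2_eq_square algebra_simps)
  finally show ?thesis
    using eps by (simp add: P_def pos_le_divide_eq mult.commute)
qed

lemma summable_Suc_if_finite_sums_bounded:
  fixes a :: "nat \<Rightarrow> real"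
  assumes nonneg: "\<And>i. 0 \<le> a i"
    and bound: "\<And>T. finite T \<Longrightarrow> T \<subseteq> {1..} \<Longrightarrow> (\<Sum>i\<in>T. a i) \<le> C"
  shows "summable (\<lambda>i. a (Suc i))"
proof (rule summableI_nonneg_bounded)
  fix n
  have "(\<Sum>i<n. a (Suc i)) = (\<Sum>i\<in>Suc ` {..<n}. a i)"
    by (simp add: sum.reindex)
  also have "\<dots> \<le> C"
    by (intro bound) auto
  finally show "(\<Sum>i<n. a (Suc i)) \<le> C" .
qed (rule nonneg)

theorem mainTheorem12:
  fixes M :: "'a measure" and N :: "'b measure"
    and EE :: "nat \<Rightarrow> 'a set" and FF :: "nat \<Rightarrow> 'b set"
  assumes "prob_space M" and "prob_space N"
    and "\<And>i. i \<ge> 1 \<Longrightarrow> EE i \<in> sets M"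
    and "\<And>i. i \<ge> 1 \<Longrightarrow> FF i \<in> sets N"
    and "\<And>i j. i \<ge> 1 \<Longrightarrow> j \<ge> 1 \<Longrightarrow> i \<noteq> j \<Longrightarrow> prob_space.indep_event M (EE i) (EE j)"
    and "\<And>i j. i \<ge> 1 \<Longrightarrow> j \<ge> 1 \<Longrightarrow> i \<noteq> j \<Longrightarrow> prob_space.indep_event N (FF i) (FF j)"
    and "\<And>i. i \<ge> 1 \<Longrightarrow> measure M (EE i) = measure N (FF i)"
    and "\<not> summable (\<lambda>i. measure M (EE (Suc i)))"
    and "E \<in> sets M" and "F \<in> sets N" and "(\<epsilon>::real) > 0"
  shows "\<exists>i::nat. i \<ge> 1 \<and>
           measure M (E \<inter> EE i) > (measure M E - \<epsilon>) * measure M (EE i) \<and>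
           measure N (F \<inter> FF i) > (measure N F - \<epsilon>) * measure N (FF i)"
proof (rule ccontr)
  assume no_good_index: "\<not> ?thesis"
  interpret M: prob_space M by fact
  interpret N: prob_space N by fact
  define goodM where "goodM = {i. measure M (E \<inter> EE i) > (measure M E - \<epsilon>) * measure M (EE i)}"
  text \<open>Indices outside goodM are bad for E; indices inside goodM are bad for F.\<close>
  have bound_M: "(\<Sum>i\<in>T - goodM. measure M (EE i)) \<le> 1 / \<epsilon>^2" if "finite T" "T \<subseteq> {1..}" for T
    using that assms(3,5,9,11) subsetD[OF \<open>T \<subseteq> {1..}\<close>]
    by (intro M.bad_events_sum_bound) (auto simp: goodM_def not_less)
  have bound_N: "(\<Sum>i\<in>T \<inter> goodM. measure M (EE i)) \<le> 1 / \<epsilon>^2" if "finite T" "T \<subseteq> {1..}" for T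
  proof -
    have "(\<Sum>i\<in>T \<inter> goodM. measure M (EE i)) = (\<Sum>i\<in>T \<inter> goodM. measure N (FF i))"
      using that assms(7) by (intro sum.cong) auto
    also have "\<dots> \<le> 1 / \<epsilon>^2"
      using that no_good_index assms(4,6,10,11) subsetD[OF \<open>T \<subseteq> {1..}\<close>]
      by (intro N.bad_events_sum_bound) (auto simp: goodM_def not_less)
    finally show ?thesis .
  qed
  have "summable (\<lambda>i. measure M (EE (Suc i)))"
  proof (rule summable_Suc_if_finite_sums_bounded)
    fix T :: "nat set" assume "finite T" "T \<subseteq> {1..}"
    then show "(\<Sum>i\<in>T. measure M (EE i)) \<le> 1 / \<epsilon>^2 + 1 / \<epsilon>^2"
      using bound_M[of T] bound_N[of T] sum.Int_Diff[of T "\<lambda>i. measure M (EE i)" goodM] by simp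
  qed simp
  with assms(8) show False ..
qed

end
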